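(* Fix weights $w_1,w_2\ge 0$ with $w_1+w_2>0$, a cost type (uniform or proportional) and a game type (simultaneous, symmetric simultaneous, or sequential). Then the optimal value of the linear program described below (with the constraints corresponding to these choices) equals the price of anarchy of the class of two-player weighted congestion games with affine costs, player weights $w_1,w_2$, the given cost type and the given game type. The LP: Let the label set be $\mathcal{L}=\{O_1,E_1,O_2,E_2\}$ for simultaneous games and $\mathcal{L}=\{O_1,E_1,O_2,E_2,F_2\}$ for sequential games. Label sets of the players: simultaneous: $\mathcal{L}_1=\{O_1,E_1\}$, $\mathcal{L}_2=\{O_2,E_2\}$; symmetric simultaneous: $\mathcal{L}_1=\mathcal{L}_2=\{O_1,E_1,O_2,E_2\}$; sequential: $\mathcal{L}_1=\{O_1,E_1\}$, $\mathcal{L}_2=\{O_2,E_2,F_2\}$. Let $R=2^{\mathcal{L}}$. Variables: $\alpha_r,\beta_r$ for $r\in R$ and $C_i(a_1,a_2)$ for $i\in\{1,2\}$, $a_1\in\mathcal{L}_1$, $a_2\in\mathcal{L}_2$. Maximize $C_1(E_1,E_2)+C_2(E_1,E_2)$ subject to: $C_1(O_1,O_2)+C_2(O_1,O_2)=1$; $C_1(a_1,a_2)+C_2(a_1,a_2)\ge 1$ for all $a_1\in\mathcal{L}_1,a_2\in\mathcal{L}_2$; $\alpha_r,\beta_r\ge0$ for all $r\in R$; for all $a_1,a_2$ and $i=1,2$: $C_i(a_1,a_2)=\sum_{r\in R:\, a_i\in r}\bigl(\alpha_r+\beta_r\sum_{j\in\{1,2\}:\, a_j\in r} w_j\bigr)$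 in the uniform case, respectively $C_i(a_1,a_2)=w_i\sum_{r\in R:\, a_i\in r}\bigl(\alpha_r+\beta_r\sum_{j\in\{1,2\}:\, a_j\in r} w_j\bigr)$ in the proportional case; in the (symmetric) simultaneous case additionally $C_1(E_1,E_2)\le C_1(a_1,E_2)$ for all $a_1\in\mathcal{L}_1$ and $C_2(E_1,E_2)\le C_2(E_1,a_2)$ for all $a_2\in\mathcal{L}_2$; in the sequential case additionally $C_2(E_1,E_2)\le C_2(E_1,a_2)$ and $C_2(O_1,F_2)\le C_2(O_1,a_2)$ for all $a_2\in\mathcal{L}_2$, and $C_1(E_1,E_2)\le C_1(O_1,F_2)$.
   Context: A weighted two-player congestion game with affine costs consists of a finite set $R'$ of resources, coefficients $\alpha_r,\beta_r \geq 0$ for each $r\in R'$, two players $i=1,2$ with weights $w_i\ge 0$, and for each player $i$ a nonempty finite set $\mathcal{A}_i \subseteq 2^{R'}$ of actions; it is symmetric if $\mathcal{A}_1=\mathcal{A}_2$. For an action profile $A=(A_1,A_2)$ the load of $r$ is $x_r(A)=\sum_{j:\, r\in A_j} w_j$. With uniform costs player $i$ pays $C_i(A)=\sum_{r\in A_i}(\alpha_r+\beta_r x_r(A))$; with proportional costs $C_i(A)=w_i\sum_{r\in A_i}(\alpha_r+\beta_r x_r(A))$. Social cost $C(A)=C_1(A)+C_2(A)$. In simultaneous games the equilibria are pure Nash equilibria (no player can lower her cost by unilaterally deviating). In sequential games player 1 chooses first and player 2 responds after observing $A_1$; a subgame-perfect equilibrium consists of a function $A_1\mapsto A_2^*(A_1)$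 with $C_2(A_1,A_2^*(A_1))\le C_2(A_1,A_2)$ for all $A_1,A_2$ and an action $A_1^*$ with $C_1(A_1^*,A_2^*(A_1^* ))\le C_1(A_1,A_2^*(A_1))$ for all $A_1$, with outcome $(A_1^*,A_2^*(A_1^* ))$. The price of anarchy of an instance is the maximum over equilibrium outcomes $A$ of $C(A)/\min_{A'}C(A')$, and of a class the supremum over its instances (with positive optimal social cost). *)

theory Defs
  imports Complex_Main "HOL-Library.Extended_Real"
begin

datatype cost_type = Uniform | Proportional
datatype game_type = Simultaneous | SymSimultaneous | Sequential

definition wt :: "real \<Rightarrow> real \<Rightarrow> nat \<Rightarrow> real" where
  "wt w1 w2 i = (if i = 1 then w1 else w2)"

definition fac :: "cost_type \<Rightarrow> real \<Rightarrow> real \<Rightarrow> nat \<Rightarrow> real" where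
  "fac ct w1 w2 i = (if ct = Proportional then wt w1 w2 i else 1)"

definition valid_game ::
  "game_type \<Rightarrow> nat set \<Rightarrow> (nat \<Rightarrow> real) \<Rightarrow> (nat \<Rightarrow> real) \<Rightarrow> nat set set \<Rightarrow> nat set set \<Rightarrow> bool" where
  "valid_game gt Rs al be As1 As2 \<longleftrightarrow>
     finite Rs \<and> (\<forall>r\<in>Rs. al r \<ge> 0 \<and> be r \<ge> 0) \<and>
     As1 \<noteq> {} \<and> As2 \<noteq> {} \<and> finite As1 \<and> finite As2 \<and>
     As1 \<subseteq> Pow Rs \<and> As2 \<subseteq> Pow Rs \<and>
     (gt = SymSimultaneous \<longrightarrow> As1 = As2)"

definition load :: "real \<Rightarrow> real \<Rightarrow> nat set \<Rightarrow> nat set \<Rightarrow> nat \<Rightarrow> real" where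
  "load w1 w2 X1 X2 r = (if r \<in> X1 then w1 else 0) + (if r \<in> X2 then w2 else 0)"

definition pcost ::
  "cost_type \<Rightarrow> real \<Rightarrow> real \<Rightarrow> (nat \<Rightarrow> real) \<Rightarrow> (nat \<Rightarrow> real) \<Rightarrow> nat \<Rightarrow> nat set \<Rightarrow> nat set \<Rightarrow> real" where
  "pcost ct w1 w2 al be i X1 X2 =
     fac ct w1 w2 i * (\<Sum>r\<in>(if i = 1 then X1 else X2). al r + be r * load w1 w2 X1 X2 r)"

definition scost ::
  "cost_type \<Rightarrow> real \<Rightarrow> real \<Rightarrow> (nat \<Rightarrow> real) \<Rightarrow> (nat \<Rightarrow> real) \<Rightarrow> nat set \<Rightarrow> nat set \<Rightarrow> real" where
  "scost ct w1 w2 al be X1 X2 = pcost ct w1 w2 al be 1 X1 X2 + pcost ct w1 w2 al be 2 X1 X2"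

definition is_NE where
  "is_NE ct w1 w2 al be As1 As2 X1 X2 \<longleftrightarrow>
     X1 \<in> As1 \<and> X2 \<in> As2 \<and>
     (\<forall>B1\<in>As1. pcost ct w1 w2 al be 1 X1 X2 \<le> pcost ct w1 w2 al be 1 B1 X2) \<and>
     (\<forall>B2\<in>As2. pcost ct w1 w2 al be 2 X1 X2 \<le> pcost ct w1 w2 al be 2 X1 B2)"

text \<open>Outcome of a subgame-perfect equilibrium (player 1 moves first).\<close>
definition is_SPE_outcome where
  "is_SPE_outcome ct w1 w2 al be As1 As2 X1 X2 \<longleftrightarrow>
     (\<exists>f :: nat set \<Rightarrow> nat set.
        (\<forall>B1\<in>As1. f B1 \<in> As2 \<and>
           (\<forall>B2\<in>As2. pcost ct w1 w2 al be 2 B1 (f B1) \<le> pcost ct w1 w2 al be 2 B1 B2)) \<and>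
        X1 \<in> As1 \<and>
        (\<forall>B1\<in>As1. pcost ct w1 w2 al be 1 X1 (f X1) \<le> pcost ct w1 w2 al be 1 B1 (f B1)) \<and>
        X2 = f X1)"

definition is_eq_outcome where
  "is_eq_outcome gt ct w1 w2 al be As1 As2 X1 X2 \<longleftrightarrow>
     (if gt = Sequential then is_SPE_outcome ct w1 w2 al be As1 As2 X1 X2
      else is_NE ct w1 w2 al be As1 As2 X1 X2)"

definition opt_cost where
  "opt_cost ct w1 w2 al be As1 As2 =
     Min {scost ct w1 w2 al be B1 B2 | B1 B2. B1 \<in> As1 \<and> B2 \<in> As2}"

definition poa_class :: "cost_type \<Rightarrow> game_type \<Rightarrow> real \<Rightarrow> real \<Rightarrow> ereal" where
  "poa_class ct gt w1 w2 =
     Sup {ereal (scost ct w1 w2 al be X1 X2 / opt_cost ct w1 w2 al be As1 As2) | Rs al be As1 As2 X1 X2.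
            valid_game gt Rs al be As1 As2 \<and> opt_cost ct w1 w2 al be As1 As2 > 0 \<and>
            is_eq_outcome gt ct w1 w2 al be As1 As2 X1 X2}"

datatype label = O1 | E1 | O2 | E2 | F2

definition Lab :: "game_type \<Rightarrow> label set" where
  "Lab gt = (if gt = Sequential then {O1, E1, O2, E2, F2} else {O1, E1, O2, E2})"

definition Lab1 :: "game_type \<Rightarrow> label set" where
  "Lab1 gt = (if gt = SymSimultaneous then {O1, E1, O2, E2} else {O1, E1})"

definition Lab2 :: "game_type \<Rightarrow> label set" where
  "Lab2 gt = (case gt of Simultaneous \<Rightarrow> {O2, E2}
                       | SymSimultaneous \<Rightarrow> {O1, E1, O2, E2}
                       | Sequential \<Rightarrow> {O2, E2, F2})"

definition sel :: "label \<Rightarrow> label \<Rightarrow> nat \<Rightarrow> label" where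
  "sel a1 a2 j = (if j = 1 then a1 else a2)"

definition lp_feasible ::
  "cost_type \<Rightarrow> game_type \<Rightarrow> real \<Rightarrow> real \<Rightarrow> (label set \<Rightarrow> real) \<Rightarrow> (label set \<Rightarrow> real)
   \<Rightarrow> (nat \<Rightarrow> label \<Rightarrow> label \<Rightarrow> real) \<Rightarrow> bool" where
  "lp_feasible ct gt w1 w2 al be C \<longleftrightarrow>
     C 1 O1 O2 + C 2 O1 O2 = 1 \<and>
     (\<forall>a1\<in>Lab1 gt. \<forall>a2\<in>Lab2 gt. C 1 a1 a2 + C 2 a1 a2 \<ge> 1) \<and>
     (\<forall>r\<in>Pow (Lab gt). al r \<ge> 0 \<and> be r \<ge> 0) \<and>
     (\<forall>a1\<in>Lab1 gt. \<forall>a2\<in>Lab2 gt. \<forall>i\<in>{1, 2}.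
        C i a1 a2 = fac ct w1 w2 i *
          (\<Sum>r\<in>{r\<in>Pow (Lab gt). sel a1 a2 i \<in> r}.
              al r + be r * (\<Sum>j\<in>{j\<in>{1, 2}. sel a1 a2 j \<in> r}. wt w1 w2 j))) \<and>
     (gt \<noteq> Sequential \<longrightarrow>
        (\<forall>a1\<in>Lab1 gt. C 1 E1 E2 \<le> C 1 a1 E2) \<and> (\<forall>a2\<in>Lab2 gt. C 2 E1 E2 \<le> C 2 E1 a2)) \<and>
     (gt = Sequential \<longrightarrow>
        (\<forall>a2\<in>Lab2 gt. C 2 E1 E2 \<le> C 2 E1 a2 \<and> C 2 O1 F2 \<le> C 2 O1 a2) \<and>
        C 1 E1 E2 \<le> C 1 O1 F2)"

definition lp_value :: "cost_type \<Rightarrow> game_type \<Rightarrow> real \<Rightarrow> real \<Rightarrow> ereal" where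
  "lp_value ct gt w1 w2 =
     Sup {ereal (C 1 E1 E2 + C 2 E1 E2) | al be C. lp_feasible ct gt w1 w2 al be C}"

end

theory Submission
  imports Defs
begin

text \<open>An LP solution is itself a game: its resources are the label sets \<open>S\<close> with coefficients
  \<open>\<alpha>\<^sub>S, \<beta>\<^sub>S\<close>, and the action labelled \<open>a\<close> uses exactly the resources \<open>S \<ni> a\<close>. Then \<open>C\<^sub>i(a\<^sub>1, a\<^sub>2)\<close>
  is the cost of player \<open>i\<close> in the profile of the actions labelled \<open>a\<^sub>1, a\<^sub>2\<close>, and the constraints
  say that \<open>(O\<^sub>1, O\<^sub>2)\<close> is optimal with social cost 1 and that \<open>(E\<^sub>1, E\<^sub>2)\<close> is an equilibrium outcome
  (\<open>F\<^sub>2\<close> being the follower's reply to \<open>O\<^sub>1\<close>). Conversely, in a game with an equilibrium outcome,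
  label the optimal profile \<open>O\<close>, the equilibrium \<open>E\<close> and the follower's reply to \<open>O\<^sub>1\<close> \<open>F\<^sub>2\<close>;
  merging all resources used by the same set of labelled actions and dividing the coefficients
  by the optimal cost gives an LP solution whose objective is the ratio of equilibrium to
  optimal cost. So both suprema range over the same set of values.\<close>

definition lp_cost ::
  "cost_type \<Rightarrow> real \<Rightarrow> real \<Rightarrow> label set \<Rightarrow> (label set \<Rightarrow> real) \<Rightarrow> (label set \<Rightarrow> real)
   \<Rightarrow> nat \<Rightarrow> label \<Rightarrow> label \<Rightarrow> real" where
  "lp_cost ct w1 w2 L al be i a1 a2 = fac ct w1 w2 i *
     (\<Sum>S\<in>{S\<in>Pow L. sel a1 a2 i \<in> S}.
        al S + be S * (\<Sum>j\<in>{j\<in>{1, 2}. sel a1 a2 j \<in> S}. wt w1 w2 j))"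

definition resource_labels :: "label set \<Rightarrow> (label \<Rightarrow> nat set) \<Rightarrow> nat \<Rightarrow> label set" where
  "resource_labels L act r = {a\<in>L. r \<in> act a}"

definition aggregate ::
  "nat set \<Rightarrow> label set \<Rightarrow> (label \<Rightarrow> nat set) \<Rightarrow> (nat \<Rightarrow> real) \<Rightarrow> label set \<Rightarrow> real" where
  "aggregate Rs L act f S = (\<Sum>r\<in>{r\<in>Rs. resource_labels L act r = S}. f r)"

lemma sum_wt_players:
  "(\<Sum>j\<in>{j\<in>{1::nat, 2}. P j}. wt w1 w2 j) = (if P 1 then w1 else 0) + (if P 2 then w2 else 0)"
  by (subst sum.inter_filter) (auto simp: wt_def)

lemma load_eq_sum_wt:
  assumes "a1 \<in> L" "a2 \<in> L"
  shows "load w1 w2 (act a1) (act a2) r =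
    (\<Sum>j\<in>{j\<in>{1, 2}. sel a1 a2 j \<in> resource_labels L act r}. wt w1 w2 j)"
  unfolding sum_wt_players using assms by (simp add: load_def sel_def resource_labels_def)

lemma pcost_eq_lp_cost_aggregate:
  assumes "finite Rs" "finite L" "\<And>a. a \<in> L \<Longrightarrow> act a \<subseteq> Rs" "a1 \<in> L" "a2 \<in> L"
  shows "pcost ct w1 w2 al be i (act a1) (act a2) =
    lp_cost ct w1 w2 L (aggregate Rs L act al) (aggregate Rs L act be) i a1 a2"
proof -
  define lab where "lab = resource_labels L act"
  define a where "a = sel a1 a2 i"
  define W where "W S = (\<Sum>j\<in>{j\<in>{1, 2}. sel a1 a2 j \<in> S}. wt w1 w2 j)" for S
  define h where "h r = al r + be r * W (lab r)" for r
  have "a \<in> L" using assms(4,5) by (simp add: a_def sel_def)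
  then have act_a: "act a = {r\<in>Rs. a \<in> lab r}"
    using assms(3) by (auto simp: lab_def resource_labels_def)
  have fin_act: "finite (act a)"
    using assms(1,3) \<open>a \<in> L\<close> by (meson finite_subset)
  have "pcost ct w1 w2 al be i (act a1) (act a2) = fac ct w1 w2 i * (\<Sum>r\<in>act a. h r)"
    using load_eq_sum_wt[OF assms(4,5)]
    by (simp add: pcost_def h_def W_def lab_def a_def sel_def)
  also have "(\<Sum>r\<in>act a. h r) = (\<Sum>S\<in>{S\<in>Pow L. a \<in> S}. \<Sum>r\<in>{r\<in>Rs. lab r = S}. h r)"
  proof -
    have "(\<Sum>r\<in>act a. h r) = (\<Sum>S\<in>{S\<in>Pow L. a \<in> S}. \<Sum>r\<in>{r\<in>act a. lab r = S}. h r)"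
      by (rule sum.group[symmetric]) (use assms(2) fin_act \<open>a \<in> L\<close> in \<open>auto simp: lab_def resource_labels_def\<close>)
    also have "\<dots> = (\<Sum>S\<in>{S\<in>Pow L. a \<in> S}. \<Sum>r\<in>{r\<in>Rs. lab r = S}. h r)"
      by (intro sum.cong refl) (auto simp: act_a)
    finally show ?thesis .
  qed
  finally show ?thesis
    by (simp add: lp_cost_def aggregate_def lab_def h_def W_def a_def sum.distrib sum_distrib_right)
qed

lemma lp_cost_divide:
  "lp_cost ct w1 w2 L (\<lambda>S. al S / c) (\<lambda>S. be S / c) i a1 a2 = lp_cost ct w1 w2 L al be i a1 a2 / c"
  by (simp add: lp_cost_def sum_divide_distrib add_divide_distrib mult.assoc flip: times_divide_eq_right)

lemma lp_cost_cong:
  assumes "\<And>S. S \<subseteq> L \<Longrightarrow> al S = al' S" "\<And>S. S \<subseteq> L \<Longrightarrow> be S = be' S"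
  shows "lp_cost ct w1 w2 L al be i a1 a2 = lp_cost ct w1 w2 L al' be' i a1 a2"
  unfolding lp_cost_def using assms by (intro arg_cong[where f = "(*) _"] sum.cong) auto

definition label_action :: "(label set \<Rightarrow> nat) \<Rightarrow> label set \<Rightarrow> label \<Rightarrow> nat set" where
  "label_action enc L a = enc ` {S\<in>Pow L. a \<in> S}"

lemma resource_labels_label_action:
  assumes "inj_on enc (Pow L)" "S \<subseteq> L"
  shows "resource_labels L (label_action enc L) (enc S) = S"
  using assms by (auto simp: resource_labels_def label_action_def dest: inj_onD)

lemma inj_on_label_action:
  assumes "inj_on enc (Pow L)"
  shows "inj_on (label_action enc L) L"
proof
  fix a b assume "a \<in> L" "b \<in> L" "label_action enc L a = label_action enc L b"
  then have "b \<in> resource_labels L (label_action enc L) (enc {a})"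
    by (auto simp: resource_labels_def label_action_def)
  with assms \<open>a \<in> L\<close> show "a = b" by (simp add: resource_labels_label_action)
qed

lemma pcost_label_action:
  assumes "inj_on enc (Pow L)" "finite L" "a1 \<in> L" "a2 \<in> L"
  defines "dec \<equiv> the_inv_into (Pow L) enc"
  shows "pcost ct w1 w2 (\<lambda>r. al (dec r)) (\<lambda>r. be (dec r)) i
      (label_action enc L a1) (label_action enc L a2) = lp_cost ct w1 w2 L al be i a1 a2"
proof -
  have aggregate: "aggregate (enc ` Pow L) L (label_action enc L) (\<lambda>r. f (dec r)) S = f S"
    if "S \<subseteq> L" for f :: "label set \<Rightarrow> real" and S
  proof -
    have "{r \<in> enc ` Pow L. resource_labels L (label_action enc L) r = S} = {enc S}"
      using assms(1) that by (auto simp: resource_labels_label_action)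
    then show ?thesis
      using assms(1) that by (simp add: aggregate_def dec_def the_inv_into_f_f)
  qed
  show ?thesis
    using assms(2-4)
    by (subst pcost_eq_lp_cost_aggregate[where Rs = "enc ` Pow L"])
       (auto simp: label_action_def aggregate intro: lp_cost_cong)
qed

lemma opt_cost_image:
  "opt_cost ct w1 w2 al be As1 As2 = Min ((\<lambda>(B1, B2). scost ct w1 w2 al be B1 B2) ` (As1 \<times> As2))"
  unfolding opt_cost_def by (rule arg_cong[where f = Min]) auto

lemma opt_cost_le:
  assumes "finite As1" "finite As2" "B1 \<in> As1" "B2 \<in> As2"
  shows "opt_cost ct w1 w2 al be As1 As2 \<le> scost ct w1 w2 al be B1 B2"
  unfolding opt_cost_image using assms by (intro Min_le) auto

lemma opt_cost_attained:
  assumes "finite As1" "finite As2" "As1 \<noteq> {}" "As2 \<noteq> {}"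
  obtains B1 B2 where "B1 \<in> As1" "B2 \<in> As2"
    "scost ct w1 w2 al be B1 B2 = opt_cost ct w1 w2 al be As1 As2"
proof -
  have "opt_cost ct w1 w2 al be As1 As2 \<in> (\<lambda>(B1, B2). scost ct w1 w2 al be B1 B2) ` (As1 \<times> As2)"
    unfolding opt_cost_image using assms by (intro Min_in) auto
  then show ?thesis using that by auto
qed

lemma opt_cost_eqI:
  assumes "finite As1" "finite As2" "B1 \<in> As1" "B2 \<in> As2"
    and "\<And>Y1 Y2. Y1 \<in> As1 \<Longrightarrow> Y2 \<in> As2 \<Longrightarrow> scost ct w1 w2 al be B1 B2 \<le> scost ct w1 w2 al be Y1 Y2"
  shows "opt_cost ct w1 w2 al be As1 As2 = scost ct w1 w2 al be B1 B2"
  unfolding opt_cost_image using assms by (intro Min_eqI) auto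

lemma O_E_labels [simp]: "O1 \<in> Lab1 gt" "E1 \<in> Lab1 gt" "O2 \<in> Lab2 gt" "E2 \<in> Lab2 gt"
  by (cases gt; simp add: Lab1_def Lab2_def)+

lemma Lab1_subset_Lab: "Lab1 gt \<subseteq> Lab gt"
  by (cases gt) (auto simp: Lab_def Lab1_def)

lemma Lab2_subset_Lab: "Lab2 gt \<subseteq> Lab gt"
  by (cases gt) (auto simp: Lab_def Lab2_def)

lemma Lab_subset_Lab1_Un_Lab2: "Lab gt \<subseteq> Lab1 gt \<union> Lab2 gt"
  by (cases gt) (auto simp: Lab_def Lab1_def Lab2_def)

lemma finite_Lab [simp]: "finite (Lab gt)" "finite (Lab1 gt)" "finite (Lab2 gt)"
  by (cases gt; simp add: Lab_def Lab1_def Lab2_def)+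

lemma Lab_Sequential [simp]: "Lab1 Sequential = {O1, E1}" "Lab2 Sequential = {O2, E2, F2}"
  by (simp_all add: Lab1_def Lab2_def)

lemma Lab1_SymSimultaneous: "Lab1 SymSimultaneous = Lab2 SymSimultaneous"
  by (simp add: Lab1_def Lab2_def)

definition lp_equilibrium_constraints :: "game_type \<Rightarrow> (nat \<Rightarrow> label \<Rightarrow> label \<Rightarrow> real) \<Rightarrow> bool" where
  "lp_equilibrium_constraints gt C \<longleftrightarrow>
     (gt \<noteq> Sequential \<longrightarrow>
        (\<forall>a1\<in>Lab1 gt. C 1 E1 E2 \<le> C 1 a1 E2) \<and> (\<forall>a2\<in>Lab2 gt. C 2 E1 E2 \<le> C 2 E1 a2)) \<and>
     (gt = Sequential \<longrightarrow>
        (\<forall>a2\<in>Lab2 gt. C 2 E1 E2 \<le> C 2 E1 a2 \<and> C 2 O1 F2 \<le> C 2 O1 a2) \<and>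
        C 1 E1 E2 \<le> C 1 O1 F2)"

lemma lp_feasible_iff:
  "lp_feasible ct gt w1 w2 al be C \<longleftrightarrow>
     C 1 O1 O2 + C 2 O1 O2 = 1 \<and>
     (\<forall>a1\<in>Lab1 gt. \<forall>a2\<in>Lab2 gt. 1 \<le> C 1 a1 a2 + C 2 a1 a2) \<and>
     (\<forall>S\<in>Pow (Lab gt). 0 \<le> al S \<and> 0 \<le> be S) \<and>
     (\<forall>a1\<in>Lab1 gt. \<forall>a2\<in>Lab2 gt. \<forall>i\<in>{1, 2}. C i a1 a2 = lp_cost ct w1 w2 (Lab gt) al be i a1 a2) \<and>
     lp_equilibrium_constraints gt C"
  unfolding lp_feasible_def lp_equilibrium_constraints_def lp_cost_def ..

lemma lp_feasibleD:
  assumes "lp_feasible ct gt w1 w2 al be C"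
  shows "C 1 O1 O2 + C 2 O1 O2 = 1"
    and "\<And>a1 a2. a1 \<in> Lab1 gt \<Longrightarrow> a2 \<in> Lab2 gt \<Longrightarrow> 1 \<le> C 1 a1 a2 + C 2 a1 a2"
    and "\<And>S. S \<subseteq> Lab gt \<Longrightarrow> 0 \<le> al S \<and> 0 \<le> be S"
    and "\<And>i a1 a2. a1 \<in> Lab1 gt \<Longrightarrow> a2 \<in> Lab2 gt \<Longrightarrow> i \<in> {1, 2} \<Longrightarrow>
      C i a1 a2 = lp_cost ct w1 w2 (Lab gt) al be i a1 a2"
    and "lp_equilibrium_constraints gt C"
  using assms unfolding lp_feasible_iff by blast+

lemma lp_equilibrium_constraints_divide:
  assumes "c > 0" and "\<And>i a1 a2. a1 \<in> Lab1 gt \<Longrightarrow> a2 \<in> Lab2 gt \<Longrightarrow> C' i a1 a2 = C i a1 a2 / c"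
  shows "lp_equilibrium_constraints gt C' \<longleftrightarrow> lp_equilibrium_constraints gt C"
  using assms by (cases gt) (auto simp: lp_equilibrium_constraints_def Lab1_def Lab2_def divide_le_cancel)

lemma lp_feasible_of_labelled_game:
  fixes act :: "label \<Rightarrow> nat set" and al be :: "nat \<Rightarrow> real" and Rs :: "nat set"
    and As1 As2 :: "nat set set" and ct w1 w2 gt
  defines "c \<equiv> opt_cost ct w1 w2 al be As1 As2"
  defines "al' \<equiv> \<lambda>S. aggregate Rs (Lab gt) act al S / c"
    and "be' \<equiv> \<lambda>S. aggregate Rs (Lab gt) act be S / c"
  assumes game: "valid_game gt Rs al be As1 As2"
    and act1: "\<And>a. a \<in> Lab1 gt \<Longrightarrow> act a \<in> As1" and act2: "\<And>a. a \<in> Lab2 gt \<Longrightarrow> act a \<in> As2"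
    and opt_pos: "c > 0" and opt: "scost ct w1 w2 al be (act O1) (act O2) = c"
    and eq: "lp_equilibrium_constraints gt (\<lambda>i a1 a2. pcost ct w1 w2 al be i (act a1) (act a2))"
  shows "lp_feasible ct gt w1 w2 al' be' (lp_cost ct w1 w2 (Lab gt) al' be')"
    and "lp_cost ct w1 w2 (Lab gt) al' be' 1 E1 E2 + lp_cost ct w1 w2 (Lab gt) al' be' 2 E1 E2 =
      scost ct w1 w2 al be (act E1) (act E2) / c"
proof -
  let ?C = "lp_cost ct w1 w2 (Lab gt) al' be'"
  have fin: "finite Rs" "finite As1" "finite As2" and nonneg: "\<forall>r\<in>Rs. 0 \<le> al r \<and> 0 \<le> be r"
    and sub: "As1 \<subseteq> Pow Rs" "As2 \<subseteq> Pow Rs"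
    using game by (auto simp: valid_game_def)
  have act_sub: "act a \<subseteq> Rs" if "a \<in> Lab gt" for a
    using that Lab_subset_Lab1_Un_Lab2 act1 act2 sub by blast
  have C_pcost: "?C i a1 a2 = pcost ct w1 w2 al be i (act a1) (act a2) / c"
    if "a1 \<in> Lab1 gt" "a2 \<in> Lab2 gt" for i a1 a2
  proof -
    have "a1 \<in> Lab gt" "a2 \<in> Lab gt" using that Lab1_subset_Lab Lab2_subset_Lab by blast+
    then have "pcost ct w1 w2 al be i (act a1) (act a2) =
        lp_cost ct w1 w2 (Lab gt) (aggregate Rs (Lab gt) act al) (aggregate Rs (Lab gt) act be) i a1 a2"
      using fin(1) act_sub by (intro pcost_eq_lp_cost_aggregate) auto
    then show ?thesis by (simp add: al'_def be'_def lp_cost_divide)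
  qed
  have C_social: "?C 1 a1 a2 + ?C 2 a1 a2 = scost ct w1 w2 al be (act a1) (act a2) / c"
    if "a1 \<in> Lab1 gt" "a2 \<in> Lab2 gt" for a1 a2
    using that by (simp add: C_pcost scost_def add_divide_distrib)
  have "1 \<le> ?C 1 a1 a2 + ?C 2 a1 a2" if "a1 \<in> Lab1 gt" "a2 \<in> Lab2 gt" for a1 a2
  proof -
    have "c \<le> scost ct w1 w2 al be (act a1) (act a2)"
      unfolding c_def using fin that act1 act2 by (intro opt_cost_le)
    then show ?thesis using opt_pos C_social[OF that] by simp
  qed
  moreover have "?C 1 O1 O2 + ?C 2 O1 O2 = 1"
    using opt opt_pos C_social[of O1 O2] by simp
  moreover have "0 \<le> al' S \<and> 0 \<le> be' S" for S
    using nonneg opt_pos by (auto simp: al'_def be'_def aggregate_def intro!: divide_nonneg_pos sum_nonneg)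
  moreover have "lp_equilibrium_constraints gt ?C"
    using eq by (subst lp_equilibrium_constraints_divide[OF opt_pos C_pcost])
  ultimately show "lp_feasible ct gt w1 w2 al' be' ?C" by (simp add: lp_feasible_iff)
  show "?C 1 E1 E2 + ?C 2 E1 E2 = scost ct w1 w2 al be (act E1) (act E2) / c"
    using C_social[OF O_E_labels(2,4)] .
qed

lemma lp_solution_of_eq_outcome:
  assumes game: "valid_game gt Rs al be As1 As2"
    and opt_pos: "opt_cost ct w1 w2 al be As1 As2 > 0"
    and eq: "is_eq_outcome gt ct w1 w2 al be As1 As2 X1 X2"
  obtains al' be' C where "lp_feasible ct gt w1 w2 al' be' C"
    and "C 1 E1 E2 + C 2 E1 E2 = scost ct w1 w2 al be X1 X2 / opt_cost ct w1 w2 al be As1 As2"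
proof -
  have fin: "finite As1" "finite As2" and ne: "As1 \<noteq> {}" "As2 \<noteq> {}"
    and sym: "gt = SymSimultaneous \<Longrightarrow> As1 = As2"
    using game by (auto simp: valid_game_def)
  obtain B1 B2 where B: "B1 \<in> As1" "B2 \<in> As2"
    and opt: "scost ct w1 w2 al be B1 B2 = opt_cost ct w1 w2 al be As1 As2"
    using fin ne by (rule opt_cost_attained)
  obtain f where f: "gt = Sequential \<Longrightarrow>
      (\<forall>Y1\<in>As1. f Y1 \<in> As2 \<and>
        (\<forall>Y2\<in>As2. pcost ct w1 w2 al be 2 Y1 (f Y1) \<le> pcost ct w1 w2 al be 2 Y1 Y2)) \<and>
      X1 \<in> As1 \<and> (\<forall>Y1\<in>As1. pcost ct w1 w2 al be 1 X1 (f X1) \<le> pcost ct w1 w2 al be 1 Y1 (f Y1)) \<and>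
      X2 = f X1"
    using eq by (cases "gt = Sequential") (auto simp: is_eq_outcome_def is_SPE_outcome_def)
  have NE: "gt \<noteq> Sequential \<Longrightarrow> is_NE ct w1 w2 al be As1 As2 X1 X2"
    using eq by (simp add: is_eq_outcome_def)
  have X: "X1 \<in> As1" "X2 \<in> As2"
    using f NE by (cases "gt = Sequential"; auto simp: is_NE_def)+
  define act where
    "act a = (case a of O1 \<Rightarrow> B1 | E1 \<Rightarrow> X1 | O2 \<Rightarrow> B2 | E2 \<Rightarrow> X2 | F2 \<Rightarrow> f B1)" for a
  have act1: "act a \<in> As1" if "a \<in> Lab1 gt" for a
    using that B X sym by (cases gt) (auto simp: Lab1_def act_def)
  have act2: "act a \<in> As2" if "a \<in> Lab2 gt" for a
    using that B X f sym by (cases gt) (auto simp: Lab2_def act_def)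
  have eq_act: "lp_equilibrium_constraints gt (\<lambda>i a1 a2. pcost ct w1 w2 al be i (act a1) (act a2))"
  proof (cases "gt = Sequential")
    case True
    then show ?thesis
      using f act2 B by (auto simp: lp_equilibrium_constraints_def act_def)
  next
    case False
    then show ?thesis
      using NE act1 act2 by (auto simp: lp_equilibrium_constraints_def is_NE_def act_def)
  qed
  have opt_act: "scost ct w1 w2 al be (act O1) (act O2) = opt_cost ct w1 w2 al be As1 As2"
    using opt by (simp add: act_def)
  note labelled = lp_feasible_of_labelled_game[OF game act1 act2 opt_pos opt_act eq_act]
  have "act E1 = X1" "act E2 = X2" by (simp_all add: act_def)
  then show ?thesis using that[OF labelled(1)] labelled(2) by simp
qed

lemma lp_cost_realization:
  assumes "finite L"
  obtains Rs :: "nat set" and act al' be' where "finite Rs" "\<And>a. act a \<subseteq> Rs" "inj_on act L"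
    and "al' ` Rs \<subseteq> al ` Pow L" "be' ` Rs \<subseteq> be ` Pow L"
    and "\<And>i a1 a2. a1 \<in> L \<Longrightarrow> a2 \<in> L \<Longrightarrow>
      pcost ct w1 w2 al' be' i (act a1) (act a2) = lp_cost ct w1 w2 L al be i a1 a2"
proof -
  obtain enc :: "label set \<Rightarrow> nat" where enc: "inj_on enc (Pow L)"
    using finite_imp_inj_to_nat_seg[of "Pow L"] assms by blast
  define dec where "dec = the_inv_into (Pow L) enc"
  show thesis
  proof (rule that[of "enc ` Pow L" "label_action enc L" "\<lambda>r. al (dec r)" "\<lambda>r. be (dec r)"])
    show "finite (enc ` Pow L)" using assms by simp
    show "label_action enc L a \<subseteq> enc ` Pow L" for a by (auto simp: label_action_def)
    show "inj_on (label_action enc L) L" using enc by (rule inj_on_label_action)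
    show "(\<lambda>r. al (dec r)) ` enc ` Pow L \<subseteq> al ` Pow L" "(\<lambda>r. be (dec r)) ` enc ` Pow L \<subseteq> be ` Pow L"
      using enc by (auto simp: dec_def the_inv_into_f_f)
    show "pcost ct w1 w2 (\<lambda>r. al (dec r)) (\<lambda>r. be (dec r)) i (label_action enc L a1) (label_action enc L a2) =
        lp_cost ct w1 w2 L al be i a1 a2" if "a1 \<in> L" "a2 \<in> L" for i a1 a2
      using enc assms that unfolding dec_def by (rule pcost_label_action)
  qed
qed

lemma is_eq_outcome_of_lp_constraints:
  assumes cost: "\<And>i a1 a2. a1 \<in> Lab1 gt \<Longrightarrow> a2 \<in> Lab2 gt \<Longrightarrow> i \<in> {1, 2} \<Longrightarrow>
      pcost ct w1 w2 al be i (act a1) (act a2) = C i a1 a2"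
    and O1_E1: "act O1 \<noteq> act E1"
    and eq: "lp_equilibrium_constraints gt C"
  shows "is_eq_outcome gt ct w1 w2 al be (act ` Lab1 gt) (act ` Lab2 gt) (act E1) (act E2)"
proof (cases "gt = Sequential")
  case True
  define f where "f B = (if B = act O1 then act F2 else act E2)" for B
  have f_O1: "f (act O1) = act F2" and f_E1: "f (act E1) = act E2"
    using O1_E1 by (simp_all add: f_def)
  have "is_SPE_outcome ct w1 w2 al be (act ` Lab1 gt) (act ` Lab2 gt) (act E1) (act E2)"
    unfolding is_SPE_outcome_def
  proof (intro exI[of _ f] conjI ballI)
    fix Y1 assume "Y1 \<in> act ` Lab1 gt"
    then have Y1: "Y1 = act O1 \<or> Y1 = act E1" using True by auto
    then show "f Y1 \<in> act ` Lab2 gt" using True by (auto simp: f_O1 f_E1)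
    show "pcost ct w1 w2 al be 1 (act E1) (f (act E1)) \<le> pcost ct w1 w2 al be 1 Y1 (f Y1)"
      using Y1 eq True by (auto simp: f_O1 f_E1 cost lp_equilibrium_constraints_def)
    fix Y2 assume "Y2 \<in> act ` Lab2 gt"
    then show "pcost ct w1 w2 al be 2 Y1 (f Y1) \<le> pcost ct w1 w2 al be 2 Y1 Y2"
      using Y1 eq True by (auto simp: f_O1 f_E1 cost lp_equilibrium_constraints_def)
  qed (simp_all add: f_E1)
  then show ?thesis using True by (simp add: is_eq_outcome_def)
next
  case False
  then have "is_NE ct w1 w2 al be (act ` Lab1 gt) (act ` Lab2 gt) (act E1) (act E2)"
    using eq by (auto simp: is_NE_def cost lp_equilibrium_constraints_def)
  then show ?thesis using False by (simp add: is_eq_outcome_def)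
qed

lemma eq_outcome_of_lp_solution:
  assumes feas: "lp_feasible ct gt w1 w2 al be C"
  obtains Rs al' be' As1 As2 X1 X2 where "valid_game gt Rs al' be' As1 As2"
    and "opt_cost ct w1 w2 al' be' As1 As2 = 1"
    and "is_eq_outcome gt ct w1 w2 al' be' As1 As2 X1 X2"
    and "scost ct w1 w2 al' be' X1 X2 = C 1 E1 E2 + C 2 E1 E2"
proof -
  note norm = lp_feasibleD(1)[OF feas] and ge1 = lp_feasibleD(2)[OF feas]
    and nonneg = lp_feasibleD(3)[OF feas] and C_eq = lp_feasibleD(4)[OF feas]
    and eq = lp_feasibleD(5)[OF feas]
  obtain Rs act al' be' where fin: "finite Rs" and sub: "\<And>a. act a \<subseteq> Rs"
    and inj: "inj_on act (Lab gt)" and coeffs: "al' ` Rs \<subseteq> al ` Pow (Lab gt)" "be' ` Rs \<subseteq> be ` Pow (Lab gt)"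
    and realize: "\<And>i a1 a2. a1 \<in> Lab gt \<Longrightarrow> a2 \<in> Lab gt \<Longrightarrow>
      pcost ct w1 w2 al' be' i (act a1) (act a2) = lp_cost ct w1 w2 (Lab gt) al be i a1 a2"
    using lp_cost_realization[OF finite_Lab(1)[of gt], of al be ct w1 w2] by blast
  have cost: "pcost ct w1 w2 al' be' i (act a1) (act a2) = C i a1 a2"
    if "a1 \<in> Lab1 gt" "a2 \<in> Lab2 gt" "i \<in> {1, 2}" for i a1 a2
  proof -
    have "a1 \<in> Lab gt" "a2 \<in> Lab gt" using that Lab1_subset_Lab Lab2_subset_Lab by blast+
    then show ?thesis using that by (simp add: realize C_eq)
  qed
  have social: "scost ct w1 w2 al' be' (act a1) (act a2) = C 1 a1 a2 + C 2 a1 a2"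
    if "a1 \<in> Lab1 gt" "a2 \<in> Lab2 gt" for a1 a2
    using that by (simp add: scost_def cost)
  define As1 where "As1 = act ` Lab1 gt"
  define As2 where "As2 = act ` Lab2 gt"
  have "valid_game gt Rs al' be' As1 As2"
    unfolding valid_game_def
  proof (intro conjI)
    show "\<forall>r\<in>Rs. 0 \<le> al' r \<and> 0 \<le> be' r"
    proof
      fix r assume "r \<in> Rs"
      then have "al' r \<in> al ` Pow (Lab gt)" "be' r \<in> be ` Pow (Lab gt)"
        using coeffs by (simp_all add: image_subset_iff)
      then show "0 \<le> al' r \<and> 0 \<le> be' r" using nonneg by auto
    qed
    show "As1 \<noteq> {}" "As2 \<noteq> {}"
      using O_E_labels(1,3)[of gt] unfolding As1_def As2_def by blast+
  qed (use fin sub Lab1_SymSimultaneous in \<open>auto simp: As1_def As2_def\<close>)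
  moreover have "opt_cost ct w1 w2 al' be' As1 As2 = 1"
  proof -
    have "opt_cost ct w1 w2 al' be' As1 As2 = scost ct w1 w2 al' be' (act O1) (act O2)"
      using ge1 norm by (intro opt_cost_eqI) (auto simp: As1_def As2_def social)
    then show ?thesis using norm by (simp add: social)
  qed
  moreover have "act O1 \<noteq> act E1"
    using inj O_E_labels(1,2)[of gt] Lab1_subset_Lab by (metis inj_onD label.distinct(1) subsetD)
  then have "is_eq_outcome gt ct w1 w2 al' be' As1 As2 (act E1) (act E2)"
    unfolding As1_def As2_def using is_eq_outcome_of_lp_constraints[OF cost _ eq] by blast
  ultimately show ?thesis using that social[OF O_E_labels(2,4)] by simp
qed

theorem theorem8:
  fixes w1 w2 :: real and ct :: cost_type and gt :: game_type
  assumes "w1 \<ge> 0" and "w2 \<ge> 0" and "w1 + w2 > 0"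
  shows "lp_value ct gt w1 w2 = poa_class ct gt w1 w2"
proof -
  \<comment> \<open>The correspondence is exact for all weights.\<close>
  have "{ereal (C 1 E1 E2 + C 2 E1 E2) | al be C. lp_feasible ct gt w1 w2 al be C} =
    {ereal (scost ct w1 w2 al be X1 X2 / opt_cost ct w1 w2 al be As1 As2) | Rs al be As1 As2 X1 X2.
       valid_game gt Rs al be As1 As2 \<and> opt_cost ct w1 w2 al be As1 As2 > 0 \<and>
       is_eq_outcome gt ct w1 w2 al be As1 As2 X1 X2}" (is "?LP = ?PoA")
  proof (intro equalityI subsetI)
    fix x assume "x \<in> ?LP"
    then obtain al be C where feas: "lp_feasible ct gt w1 w2 al be C"
      and x: "x = ereal (C 1 E1 E2 + C 2 E1 E2)" by blast
    obtain Rs al' be' As1 As2 X1 X2 where "valid_game gt Rs al' be' As1 As2"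
      and "opt_cost ct w1 w2 al' be' As1 As2 = 1"
      and "is_eq_outcome gt ct w1 w2 al' be' As1 As2 X1 X2"
      and "scost ct w1 w2 al' be' X1 X2 = C 1 E1 E2 + C 2 E1 E2"
      using feas by (rule eq_outcome_of_lp_solution)
    then show "x \<in> ?PoA" unfolding x by force
  next
    fix x assume "x \<in> ?PoA"
    then obtain Rs al be As1 As2 X1 X2 where game: "valid_game gt Rs al be As1 As2"
      and opt_pos: "opt_cost ct w1 w2 al be As1 As2 > 0"
      and eq: "is_eq_outcome gt ct w1 w2 al be As1 As2 X1 X2"
      and x: "x = ereal (scost ct w1 w2 al be X1 X2 / opt_cost ct w1 w2 al be As1 As2)" by blast
    obtain al' be' C where "lp_feasible ct gt w1 w2 al' be' C"
      and "C 1 E1 E2 + C 2 E1 E2 = scost ct w1 w2 al be X1 X2 / opt_cost ct w1 w2 al be As1 As2"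
      using game opt_pos eq by (rule lp_solution_of_eq_outcome)
    then show "x \<in> ?LP" unfolding x by force
  qed
  then show ?thesis by (simp add: lp_value_def poa_class_def)
qed

end
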